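(* Let $p\in\mathbb{N}$ and $\eta\in N_p$. Then the radical of the ideal $I(\eta)\subseteq S$ generated by $\{\langle\eta,\delta\rangle:\ \delta\in\mathrm{Der}(-\log\mathscr{X})\}$ contains the irrelevant maximal ideal $S_+=\bigoplus_{q>0}S_q$.
   Context: $V=\mathbb{C}^\ell$, $S=\mathbb{C}[x_1,\dots,x_\ell]$. $\mathscr{X}=\{\mathscr{X}_1,\dots,\mathscr{X}_s\}$ is a central equidimensional subspace arrangement (finite set of linear subspaces of equal codimension) with radical ideal $\mathcal{I}_\mathscr{X}$. Its intersection lattice is $L(\mathscr{X})=\{\bigcap_{i\in I}\mathscr{X}_i: I\subseteq\{1,\dots,s\}\}$ (the empty intersection being $V$). $\Omega^1_p$ denotes the space of $1$-forms $\sum a_i dx_i$ with all $a_i$ homogeneous polynomials of degree $p$; for a linear subspace $X$ of $V$, $r_{V,X}(\eta)$ denotes the restriction (pullback) of $\eta$ to $X$, a $1$-form on $X$ with coefficients homogeneous of degree $p$. $N_p$ is the set of $\eta\in\Omega^1_p$ such that for every $X\in L(\mathscr{X})$ with $\dim X>0$ (including $X=V$), $r_{V,X}(\eta)$ vanishes only at the origin of $X$. $\mathrm{Der}(-\log\mathscr{X})=\{\delta$ polynomial vector field on $V$ : $\delta(\mathcal{I}_\mathscr{X})\subseteq\mathcal{I}_\mathscr{X}\}$, and $\langle\eta,\delta\rangle$ is the contraction. *)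

theory Defs
  imports "HOL-Analysis.Analysis" "HOL-Library.Poly_Mapping"
begin

text \<open>Polynomial ring S = C[x_i : i in 'n] (for a finite index type 'n, |'n| = l),
  represented as finitely supported maps from exponent vectors to coefficients.
  V = complex^'n.\<close>

type_synonym 'n mpoly = "('n \<Rightarrow>\<^sub>0 nat) \<Rightarrow>\<^sub>0 complex"

definition mdeg :: "('n::finite \<Rightarrow>\<^sub>0 nat) \<Rightarrow> nat" where
  "mdeg m = (\<Sum>i\<in>UNIV. Poly_Mapping.lookup m i)"

definition homogeneous :: "nat \<Rightarrow> 'n::finite mpoly \<Rightarrow> bool" where
  "homogeneous q f \<longleftrightarrow> (\<forall>m\<in>Poly_Mapping.keys f. mdeg m = q)"

definition eval :: "'n::finite mpoly \<Rightarrow> complex^'n \<Rightarrow> complex" where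
  "eval f x = (\<Sum>m\<in>Poly_Mapping.keys f. Poly_Mapping.lookup f m * (\<Prod>i\<in>UNIV. (x $ i) ^ Poly_Mapping.lookup m i))"

definition pder :: "'n \<Rightarrow> 'n::finite mpoly \<Rightarrow> 'n mpoly" where
  "pder i f = (\<Sum>m\<in>Poly_Mapping.keys f. Poly_Mapping.single (m - Poly_Mapping.single i 1)
                              (Poly_Mapping.lookup f m * of_nat (Poly_Mapping.lookup m i)))"

definition apply_vf :: "('n \<Rightarrow> 'n mpoly) \<Rightarrow> 'n::finite mpoly \<Rightarrow> 'n mpoly" where
  "apply_vf \<delta> f = (\<Sum>i\<in>UNIV. \<delta> i * pder i f)"

text \<open>Polynomial 1-forms eta = sum_i eta_i dx_i; contraction with a vector field.\<close>
definition contract :: "('n \<Rightarrow> 'n mpoly) \<Rightarrow> ('n \<Rightarrow> 'n mpoly) \<Rightarrow> 'n::finite mpoly" where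
  "contract \<eta> \<delta> = (\<Sum>i\<in>UNIV. \<eta> i * \<delta> i)"

definition ideal_gen :: "'n::finite mpoly set \<Rightarrow> 'n mpoly set" where
  "ideal_gen G = {f. \<exists>F c. finite F \<and> F \<subseteq> G \<and> f = (\<Sum>g\<in>F. c g * g)}"

definition radical :: "'n::finite mpoly set \<Rightarrow> 'n mpoly set" where
  "radical I = {f. \<exists>k. f ^ k \<in> I}"

definition irrelevant_ideal :: "'n::finite mpoly set" where
  "irrelevant_ideal = {f. Poly_Mapping.lookup f 0 = 0}"

definition arr_ideal :: "(complex^'n) set set \<Rightarrow> 'n::finite mpoly set" where
  "arr_ideal Xs = {f. \<forall>X\<in>Xs. \<forall>x\<in>X. eval f x = 0}"

definition logDer :: "(complex^'n) set set \<Rightarrow> ('n::finite \<Rightarrow> 'n mpoly) set" where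
  "logDer Xs = {\<delta>. \<forall>f\<in>arr_ideal Xs. apply_vf \<delta> f \<in> arr_ideal Xs}"

definition central_equidim_arrangement :: "(complex^'n::finite) set set \<Rightarrow> bool" where
  "central_equidim_arrangement Xs \<longleftrightarrow> finite Xs \<and> (\<forall>X\<in>Xs. vec.subspace X)
     \<and> (\<exists>d. \<forall>X\<in>Xs. vec.dim X = d)"

text \<open>Intersection lattice; the empty intersection is V = UNIV.\<close>
definition int_lattice :: "(complex^'n::finite) set set \<Rightarrow> (complex^'n) set set" where
  "int_lattice Xs = {\<Inter> J | J. J \<subseteq> Xs}"

definition forms :: "nat \<Rightarrow> ('n::finite \<Rightarrow> 'n mpoly) set" where
  "forms p = {\<eta>. \<forall>i. homogeneous p (\<eta> i)}"

text \<open>The pullback r_{V,X}(eta) vanishes at x in X iff the covector sum_i eta_i(x) dx_i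
  is zero on the tangent space X.\<close>
definition restr_vanishes_at :: "('n \<Rightarrow> 'n mpoly) \<Rightarrow> (complex^'n) set \<Rightarrow> complex^'n::finite \<Rightarrow> bool" where
  "restr_vanishes_at \<eta> X x \<longleftrightarrow> (\<forall>v\<in>X. (\<Sum>i\<in>UNIV. eval (\<eta> i) x * v $ i) = 0)"

definition Np :: "(complex^'n) set set \<Rightarrow> nat \<Rightarrow> ('n::finite \<Rightarrow> 'n mpoly) set" where
  "Np Xs p = {\<eta>\<in>forms p. \<forall>X\<in>int_lattice Xs. vec.dim X > 0 \<longrightarrow>
      (\<forall>x\<in>X. restr_vanishes_at \<eta> X x \<longrightarrow> x = 0)}"

end

(*
  By the Nullstellensatz it suffices that the contractions <eta, delta> with delta in
  Der(-log X) have no common zero x \<noteq> 0. For such an x let X be the intersection of the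
  subspaces of the arrangement through x; as eta is in N_p, some v in X has eta(x)(v) \<noteq> 0.
  Multiplying the constant field v by a polynomial h that vanishes on the subspaces not
  through x, but not at x, gives a logarithmic field h v (tangent to the subspaces through x,
  zero on the others), and <eta, h v>(x) = h(x) eta(x)(v) \<noteq> 0.

  The Nullstellensatz is proved from the uncountability of the complex numbers: modulo a
  prime ideal P maximal among those avoiding the powers of f, every polynomial t is congruent
  to a constant, for otherwise uncountably many congruences f^k = r (t - c) with linearly
  dependent r would put a nonzero univariate polynomial in t into P.
*)

theory Submission
  imports Defs "HOL-Computational_Algebra.Fundamental_Theorem_Algebra"
begin

text \<open>Ideals of a commutative ring are its submodules over itself, so ideal generation is \<open>span\<close>.
  The simp rule \<open>scale_scale\<close> would loop against \<open>mult.assoc\<close> and is removed.\<close>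

interpretation ring_ideal: module "(*) :: 'a::comm_ring_1 \<Rightarrow> 'a \<Rightarrow> 'a"
  by standard (simp_all add: algebra_simps)

declare ring_ideal.scale_scale [simp del]

lemma ideal_gen_eq_span: "ideal_gen G = ring_ideal.span G"
  unfolding ideal_gen_def ring_ideal.span_explicit by auto

definition prime_ideal :: "'a::comm_ring_1 set \<Rightarrow> bool" where
  "prime_ideal P \<longleftrightarrow> ring_ideal.subspace P \<and> 1 \<notin> P \<and> (\<forall>a b. a * b \<in> P \<longrightarrow> a \<in> P \<or> b \<in> P)"

lemma prime_ideal_prod:
  assumes "prime_ideal P" "finite A" "prod g A \<in> P"
  shows "\<exists>a\<in>A. g a \<in> P"
  using assms(2,3)
proof (induction A rule: finite_induct)
  case empty
  then show ?case using assms(1) by (simp add: prime_ideal_def)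
next
  case (insert a A)
  then show ?case using assms(1) unfolding prime_ideal_def by auto
qed

lemma ring_ideal_Union_chain:
  assumes "C \<noteq> {}" and sub: "\<And>J. J \<in> C \<Longrightarrow> ring_ideal.subspace J"
    and chain: "\<And>J1 J2. J1 \<in> C \<Longrightarrow> J2 \<in> C \<Longrightarrow> J1 \<subseteq> J2 \<or> J2 \<subseteq> J1"
  shows "ring_ideal.subspace (\<Union>C)"
proof (rule ring_ideal.subspaceI)
  show "0 \<in> \<Union>C" using assms(1) sub ring_ideal.subspace_0 by blast
  show "x * y \<in> \<Union>C" if "y \<in> \<Union>C" for x y
    using that sub ring_ideal.subspace_scale by blast
  fix x y assume "x \<in> \<Union>C" "y \<in> \<Union>C"
  then obtain J1 J2 where J: "J1 \<in> C" "J2 \<in> C" "x \<in> J1" "y \<in> J2" by auto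
  from chain[OF J(1,2)] have "x \<in> J1 \<union> J2 \<and> y \<in> J1 \<union> J2 \<and> J1 \<union> J2 \<in> C"
    using J by (auto simp: sup.absorb1 sup.absorb2)
  then show "x + y \<in> \<Union>C" using sub ring_ideal.subspace_add by blast
qed

lemma ideal_avoiding_powers_extends_to_saturated:
  fixes I :: "'a::comm_ring_1 set"
  assumes "ring_ideal.subspace I" "\<forall>k. f ^ k \<notin> I"
  obtains P where "ring_ideal.subspace P" "I \<subseteq> P" "\<forall>k. f ^ k \<notin> P"
    "\<And>g. g \<notin> P \<Longrightarrow> \<exists>k r. f ^ k - r * g \<in> P"
proof -
  define A where "A = {J. ring_ideal.subspace J \<and> I \<subseteq> J \<and> (\<forall>k. f ^ k \<notin> J)}"
  have chain_bound: "\<exists>U\<in>A. \<forall>J\<in>C. J \<subseteq> U" if C: "C \<in> chains A" for C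
  proof (cases "C = {}")
    case True
    then show ?thesis using assms by (auto simp: A_def)
  next
    case False
    have sub: "ring_ideal.subspace J \<and> I \<subseteq> J \<and> (\<forall>k. f ^ k \<notin> J)" if "J \<in> C" for J
      using chainsD2[OF C] that unfolding A_def by blast
    have "ring_ideal.subspace (\<Union>C)"
      using False sub chainsD[OF C] by (intro ring_ideal_Union_chain) blast+
    with False sub have "\<Union>C \<in> A"
      unfolding A_def by blast
    then show ?thesis by blast
  qed
  have "\<exists>M\<in>A. \<forall>J\<in>A. M \<subseteq> J \<longrightarrow> J = M"
    using chain_bound by (rule Zorn_Lemma2[rule_format])
  then obtain P where P: "P \<in> A" and max: "\<And>J. J \<in> A \<Longrightarrow> P \<subseteq> J \<Longrightarrow> J = P"
    by blast
  have "\<exists>k r. f ^ k - r * g \<in> P" if "g \<notin> P" for g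
  proof -
    let ?J = "ring_ideal.span (insert g P)"
    have "P \<subseteq> ?J" "g \<in> ?J"
      by (auto intro: ring_ideal.span_base)
    with that max[of ?J] have "?J \<notin> A" by auto
    moreover have "I \<subseteq> ?J"
      using P \<open>P \<subseteq> ?J\<close> unfolding A_def by blast
    ultimately obtain k where "f ^ k \<in> ?J"
      unfolding A_def by auto
    moreover have "ring_ideal.span P = P"
      using P by (simp add: A_def)
    ultimately show ?thesis
      by (auto simp: ring_ideal.span_insert)
  qed
  with P show ?thesis
    by (intro that) (auto simp: A_def)
qed

lemma saturated_ideal_is_prime:
  fixes P :: "'a::comm_ring_1 set"
  assumes P: "ring_ideal.subspace P" "\<forall>k. f ^ k \<notin> P"
    and sat: "\<And>g. g \<notin> P \<Longrightarrow> \<exists>k r. f ^ k - r * g \<in> P"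
  shows "prime_ideal P"
  unfolding prime_ideal_def
proof (intro conjI allI impI)
  show "1 \<notin> P" using spec[OF P(2), of 0] by simp
  fix a b assume ab: "a * b \<in> P"
  show "a \<in> P \<or> b \<in> P"
  proof (rule ccontr)
    assume "\<not> (a \<in> P \<or> b \<in> P)"
    then obtain k1 r1 k2 r2 where a: "f ^ k1 - r1 * a \<in> P" and b: "f ^ k2 - r2 * b \<in> P"
      using sat by blast
    have "f ^ (k1 + k2) = f ^ k2 * (f ^ k1 - r1 * a) + (r1 * a) * (f ^ k2 - r2 * b) + (r1 * r2) * (a * b)"
      by (simp add: power_add right_diff_distrib mult_ac)
    also have "\<dots> \<in> P"
      using a b ab by (simp add: P(1) ring_ideal.subspace_add ring_ideal.subspace_scale)
    finally show False using P(2) by blast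
  qed
qed (fact P(1))

lemma exists_nontrivial_linear_relation:
  fixes v :: "'j \<Rightarrow> 'k \<Rightarrow> 'a::field"
  assumes "finite B" "finite J" "card B < card J"
  shows "\<exists>l. (\<exists>j\<in>J. l j \<noteq> 0) \<and> (\<forall>b\<in>B. (\<Sum>j\<in>J. l j * v j b) = 0)"
  using assms
proof (induction B arbitrary: J v rule: finite_induct)
  case empty
  then obtain j where "j \<in> J" by (metis card.empty ex_in_conv less_irrefl)
  then show ?case by (intro exI[of _ "\<lambda>_. 1"]) auto
next
  case (insert b B)
  show ?case
  proof (cases "\<forall>j\<in>J. v j b = 0")
    case True
    with insert show ?thesis by fastforce
  next
    case False
    then obtain j0 where j0: "j0 \<in> J" "v j0 b \<noteq> 0" by auto
    define J' where "J' = J - {j0}"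
    \<comment> \<open>Gaussian elimination of the unknown indexed by \<open>j0\<close> from the equation indexed by \<open>b\<close>.\<close>
    define w where "w j k = v j k - (v j b / v j0 b) * v j0 k" for j k
    have "card B < card J'" "finite J'"
      using insert.prems insert.hyps j0 by (auto simp: J'_def)
    from insert.IH[OF this(2,1), of w] obtain m where
      m: "\<exists>j\<in>J'. m j \<noteq> 0" "\<forall>k\<in>B. (\<Sum>j\<in>J'. m j * w j k) = 0" by auto
    define l where "l j = (if j = j0 then - (\<Sum>j\<in>J'. m j * v j b) / v j0 b else m j)" for j
    have l_w: "(\<Sum>j\<in>J. l j * v j k) = (\<Sum>j\<in>J'. m j * w j k)" for k
    proof -
      have "(\<Sum>j\<in>J. l j * v j k) = l j0 * v j0 k + (\<Sum>j\<in>J'. l j * v j k)"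
        using sum.remove[OF insert.prems(1) j0(1)] by (simp add: J'_def)
      also have "(\<Sum>j\<in>J'. l j * v j k) = (\<Sum>j\<in>J'. m j * v j k)"
        by (intro sum.cong) (auto simp: l_def J'_def)
      finally have "(\<Sum>j\<in>J. l j * v j k) = l j0 * v j0 k + (\<Sum>j\<in>J'. m j * v j k)" .
      moreover have "(\<Sum>j\<in>J'. m j * w j k) = (\<Sum>j\<in>J'. m j * v j k) - (\<Sum>j\<in>J'. m j * v j b) / v j0 b * v j0 k"
        by (simp add: w_def right_diff_distrib sum_subtractf sum_divide_distrib sum_distrib_left
            sum_distrib_right mult_ac)
      ultimately show ?thesis by (simp add: l_def)
    qed
    have "w j b = 0" for j using j0 by (simp add: w_def)
    moreover from m(1) have "\<exists>j\<in>J. l j \<noteq> 0" by (auto simp: l_def J'_def)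
    ultimately show ?thesis using m(2) by (auto simp: l_w)
  qed
qed

lemma uncountable_UNIV_infinite_fibre:
  fixes \<phi> :: "'a \<Rightarrow> 'b::countable"
  assumes "uncountable (UNIV :: 'a set)"
  obtains b where "infinite (\<phi> -` {b})"
proof (rule ccontr)
  assume "\<not> thesis"
  with that have "countable (\<Union>b. \<phi> -` {b})"
    by (intro countable_UN) (auto intro: countable_finite)
  moreover have "(\<Union>b. \<phi> -` {b}) = UNIV" by auto
  ultimately show False using assms by simp
qed

lemma lagrange_combination_nonzero:
  fixes l :: "'a \<Rightarrow> 'a::idom"
  assumes J: "finite J" "c0 \<in> J" "l c0 \<noteq> 0"
  shows "(\<Sum>c\<in>J. smult (l c) (\<Prod>c'\<in>J - {c}. [:- c', 1:])) \<noteq> 0"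
proof
  assume zero: "(\<Sum>c\<in>J. smult (l c) (\<Prod>c'\<in>J - {c}. [:- c', 1:])) = 0"
  have "(\<Sum>c\<in>J - {c0}. l c * (\<Prod>c'\<in>J - {c}. c0 - c')) = 0"
    using J by (intro sum.neutral ballI) (auto intro!: prod_zero bexI[of _ c0])
  then have "poly (\<Sum>c\<in>J. smult (l c) (\<Prod>c'\<in>J - {c}. [:- c', 1:])) c0 = l c0 * (\<Prod>c'\<in>J - {c0}. c0 - c')"
    using sum.remove[OF J(1,2), of "\<lambda>c. l c * (\<Prod>c'\<in>J - {c}. c0 - c')"]
    by (simp add: poly_sum poly_prod)
  moreover have "(\<Prod>c'\<in>J - {c0}. c0 - c') \<noteq> 0" using J(1) by auto
  ultimately show False using zero J(3) by simp
qed

definition eval_monomial :: "('n::finite \<Rightarrow>\<^sub>0 nat) \<Rightarrow> complex^'n \<Rightarrow> complex" where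
  "eval_monomial m x = (\<Prod>i\<in>UNIV. (x $ i) ^ Poly_Mapping.lookup m i)"

definition mconst :: "complex \<Rightarrow> 'n::finite mpoly" where
  "mconst c = Poly_Mapping.single 0 c"

definition mvar :: "'n \<Rightarrow> 'n::finite mpoly" where
  "mvar i = Poly_Mapping.single (Poly_Mapping.single i 1) 1"

lemma eval_monomial_add: "eval_monomial (m + n) x = eval_monomial m x * eval_monomial n x"
  by (simp add: eval_monomial_def lookup_add power_add prod.distrib)

lemma eval_monomial_0 [simp]: "eval_monomial 0 x = 1"
  by (simp add: eval_monomial_def)

lemma eval_monomial_at_0: "eval_monomial m 0 = (if m = 0 then 1 else 0)"
proof (cases "m = 0")
  case False
  then obtain i where "Poly_Mapping.lookup m i \<noteq> 0"
    by (metis lookup_zero poly_mapping_eqI)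
  with False show ?thesis
    unfolding eval_monomial_def by (auto intro!: prod_zero)
qed simp

lemma eval_eq_sum_over_superset:
  assumes "finite K" "Poly_Mapping.keys f \<subseteq> K"
  shows "eval f x = (\<Sum>m\<in>K. Poly_Mapping.lookup f m * eval_monomial m x)"
  unfolding eval_def eval_monomial_def
  by (rule sum.mono_neutral_left[OF assms]) (auto simp: in_keys_iff)

lemma eval_0 [simp]: "eval 0 x = 0"
  by (simp add: eval_def)

lemma eval_1 [simp]: "eval 1 x = 1"
  by (simp add: eval_def)

lemma eval_single: "eval (Poly_Mapping.single m c) x = c * eval_monomial m x"
  by (subst eval_eq_sum_over_superset[of "{m}"]) auto

lemma eval_add: "eval (f + g) x = eval f x + eval g x"
proof -
  let ?K = "Poly_Mapping.keys f \<union> Poly_Mapping.keys g"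
  have "Poly_Mapping.keys (f + g) \<subseteq> ?K" by (simp add: keys_add)
  then have "eval (f + g) x = (\<Sum>m\<in>?K. Poly_Mapping.lookup (f + g) m * eval_monomial m x)"
    by (intro eval_eq_sum_over_superset) auto
  also have "\<dots> = (\<Sum>m\<in>?K. Poly_Mapping.lookup f m * eval_monomial m x)
      + (\<Sum>m\<in>?K. Poly_Mapping.lookup g m * eval_monomial m x)"
    by (simp add: lookup_add distrib_right sum.distrib)
  also have "\<dots> = eval f x + eval g x"
    by (subst (1 2) eval_eq_sum_over_superset[of ?K]) auto
  finally show ?thesis .
qed

lemma eval_sum: "eval (sum F A) x = (\<Sum>a\<in>A. eval (F a) x)"
  by (induction A rule: infinite_finite_induct) (auto simp: eval_add)

lemma mpoly_eq_sum_singles: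
  "f = (\<Sum>m\<in>Poly_Mapping.keys f. Poly_Mapping.single m (Poly_Mapping.lookup f m))"
  by (rule poly_mapping_eqI)
    (simp add: lookup_sum lookup_single when_def in_keys_iff sum.delta' split: if_splits)

lemma eval_mult: "eval (f * g) x = eval f x * eval g x"
proof -
  have "f * g = (\<Sum>m\<in>Poly_Mapping.keys f. \<Sum>n\<in>Poly_Mapping.keys g.
      Poly_Mapping.single (m + n) (Poly_Mapping.lookup f m * Poly_Mapping.lookup g n))"
    by (subst mpoly_eq_sum_singles[of f], subst mpoly_eq_sum_singles[of g])
      (simp add: sum_product mult_single)
  then have "eval (f * g) x = (\<Sum>m\<in>Poly_Mapping.keys f. \<Sum>n\<in>Poly_Mapping.keys g.
      (Poly_Mapping.lookup f m * eval_monomial m x) * (Poly_Mapping.lookup g n * eval_monomial n x))"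
    by (simp add: eval_sum eval_single eval_monomial_add mult_ac)
  also have "\<dots> = eval f x * eval g x"
    by (simp add: eval_eq_sum_over_superset[OF finite_keys subset_refl] sum_product)
  finally show ?thesis .
qed

lemma eval_prod: "eval (prod F A) x = (\<Prod>a\<in>A. eval (F a) x)"
  by (induction A rule: infinite_finite_induct) (auto simp: eval_mult)

lemma eval_mconst [simp]: "eval (mconst c) x = c"
  by (simp add: mconst_def eval_single)

lemma eval_mvar [simp]: "eval (mvar i) x = x $ i"
proof -
  have "eval_monomial (Poly_Mapping.single i 1) x = (\<Prod>j\<in>UNIV. if j = i then x $ i else 1)"
    unfolding eval_monomial_def by (intro prod.cong) (auto simp: lookup_single)
  then show ?thesis by (simp add: mvar_def eval_single)
qed

lemma eval_at_0: "eval f 0 = Poly_Mapping.lookup f 0"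
proof -
  have "eval f 0 = (\<Sum>m\<in>insert 0 (Poly_Mapping.keys f). Poly_Mapping.lookup f m * (if m = 0 then 1 else 0))"
    by (subst eval_eq_sum_over_superset[of "insert 0 (Poly_Mapping.keys f)"])
      (auto simp: eval_monomial_at_0)
  also have "\<dots> = (\<Sum>m\<in>insert 0 (Poly_Mapping.keys f). if m = 0 then Poly_Mapping.lookup f m else 0)"
    by (intro sum.cong) auto
  also have "\<dots> = Poly_Mapping.lookup f 0"
    by (simp add: sum.delta)
  finally show ?thesis .
qed

lemma mconst_0 [simp]: "mconst 0 = 0"
  by (simp add: mconst_def)

lemma mconst_1 [simp]: "mconst 1 = 1"
  by (simp add: mconst_def)

lemma mconst_add: "mconst (a + b) = mconst a + mconst b"
  by (simp add: mconst_def single_add)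

lemma mconst_mult: "mconst (a * b) = mconst a * mconst b"
  by (simp add: mconst_def mult_single)

lemma mconst_uminus: "mconst (- a) = - mconst a"
  by (simp add: mconst_def single_uminus)

lemma mconst_sum: "mconst (sum f A) = (\<Sum>a\<in>A. mconst (f a))"
  by (induction A rule: infinite_finite_induct) (auto simp: mconst_add)

lemma lookup_mconst_mult: "Poly_Mapping.lookup (mconst a * f) m = a * Poly_Mapping.lookup f m"
  by (simp add: mconst_def mult_map_scale_conv_mult[symmetric] map.rep_eq when_def)

lemma single_eq_mconst_times_mvars:
  fixes m :: "'n::finite \<Rightarrow>\<^sub>0 nat"
  shows "Poly_Mapping.single m c = mconst c * (\<Prod>i\<in>UNIV. mvar i ^ Poly_Mapping.lookup m i)"
proof -
  have mvar_power: "mvar i ^ n = Poly_Mapping.single (Poly_Mapping.single i n) 1" for i :: 'n and n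
    by (induction n) (auto simp: mvar_def mult_single single_add[symmetric])
  have single_prod: "(\<Prod>i\<in>A. Poly_Mapping.single (k i) (a i)) = Poly_Mapping.single (\<Sum>i\<in>A. k i) (\<Prod>i\<in>A. a i :: complex)"
    for A :: "'n set" and k a
    by (induction A rule: infinite_finite_induct) (auto simp: mult_single)
  have "(\<Sum>i\<in>UNIV. Poly_Mapping.single i (Poly_Mapping.lookup m i)) = m"
    by (rule poly_mapping_eqI) (simp add: lookup_sum lookup_single when_def)
  then show ?thesis
    by (simp add: mvar_power single_prod mconst_def mult_single)
qed

lemma finite_monomials_of_bounded_degree: "finite {m :: 'n::finite \<Rightarrow>\<^sub>0 nat. mdeg m \<le> d}"
proof -
  have "Poly_Mapping.lookup m i \<le> d" if "mdeg m \<le> d" for m :: "'n \<Rightarrow>\<^sub>0 nat" and i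
    using that member_le_sum[of i UNIV "Poly_Mapping.lookup m"] by (simp add: mdeg_def)
  then have "Poly_Mapping.lookup ` {m :: 'n \<Rightarrow>\<^sub>0 nat. mdeg m \<le> d} \<subseteq> PiE UNIV (\<lambda>_. {..d})"
    by auto
  then have "finite (Poly_Mapping.lookup ` {m :: 'n \<Rightarrow>\<^sub>0 nat. mdeg m \<le> d})"
    by (rule finite_subset) (auto intro: finite_PiE)
  then show ?thesis
    by (rule finite_imageD) (auto simp: inj_on_def poly_mapping_eqI)
qed

lemma eval_congruence:
  assumes P: "ring_ideal.subspace P" and vars: "\<And>i. mvar i - mconst (c $ i) \<in> P"
  shows "g - mconst (eval g c) \<in> P"
proof -
  define Q where "Q g \<longleftrightarrow> g - mconst (eval g c) \<in> P" for g :: "'a mpoly"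
  have Q_add: "Q (a + b)" if "Q a" "Q b" for a b
  proof -
    have "a + b - mconst (eval (a + b) c) = (a - mconst (eval a c)) + (b - mconst (eval b c))"
      by (simp add: eval_add mconst_add algebra_simps)
    also have "\<dots> \<in> P"
      using that unfolding Q_def by (rule ring_ideal.subspace_add[OF P])
    finally show ?thesis unfolding Q_def .
  qed
  have Q_mult: "Q (a * b)" if "Q a" "Q b" for a b
  proof -
    have "a * b - mconst (eval (a * b) c)
        = a * (b - mconst (eval b c)) + mconst (eval b c) * (a - mconst (eval a c))"
      by (simp add: eval_mult mconst_mult algebra_simps)
    also have "\<dots> \<in> P"
      using that unfolding Q_def
      by (intro ring_ideal.subspace_add[OF P] ring_ideal.subspace_scale[OF P])
    finally show ?thesis unfolding Q_def .
  qed
  have Q_mconst: "Q (mconst a)" for a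
    using P by (simp add: Q_def ring_ideal.subspace_0)
  have Q_prod: "Q (prod F A)" if "\<And>x. x \<in> A \<Longrightarrow> Q (F x)" for F and A :: "'b set"
    using that by (induction A rule: infinite_finite_induct) (auto intro: Q_mult simp: Q_mconst[of 1, simplified])
  have Q_single: "Q (Poly_Mapping.single m a)" for m a
  proof -
    have "Q (mvar i)" for i
      using vars by (simp add: Q_def)
    then have "Q (mvar i ^ n)" for i n
      by (induction n) (auto intro: Q_mult simp: Q_mconst[of 1, simplified])
    then show ?thesis
      unfolding single_eq_mconst_times_mvars by (intro Q_mult Q_mconst Q_prod)
  qed
  have Q_sum: "Q (sum F A)" if "\<And>x. Q (F x)" for F and A :: "'b set"
    using that by (induction A rule: infinite_finite_induct) (auto intro: Q_add simp: Q_mconst[of 0, simplified])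
  have "Q (\<Sum>m\<in>Poly_Mapping.keys g. Poly_Mapping.single m (Poly_Mapping.lookup g m))"
    by (rule Q_sum) (rule Q_single)
  then show ?thesis
    unfolding Q_def by (simp only: mpoly_eq_sum_singles[symmetric])
qed

lemma map_poly_mconst_add: "map_poly mconst (p + q) = map_poly mconst p + map_poly mconst q"
  by (rule poly_eqI) (simp add: coeff_map_poly mconst_add)

lemma map_poly_mconst_mult: "map_poly mconst (p * q) = map_poly mconst p * map_poly mconst q"
  by (rule poly_eqI) (simp add: coeff_map_poly coeff_mult mconst_sum mconst_mult)

lemma map_poly_mconst_smult: "map_poly mconst (smult a p) = smult (mconst a) (map_poly mconst p)"
  by (rule poly_eqI) (simp add: coeff_map_poly mconst_mult)

lemma map_poly_mconst_linear: "map_poly mconst [:a, b:] = [:mconst a, mconst b:]"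
  by (rule poly_eqI) (simp add: coeff_map_poly coeff_pCons split: nat.splits)

lemma map_poly_mconst_sum: "map_poly mconst (sum f A) = (\<Sum>a\<in>A. map_poly mconst (f a))"
  by (induction A rule: infinite_finite_induct) (auto simp: map_poly_mconst_add)

lemma map_poly_mconst_prod: "map_poly mconst (prod f A) = (\<Prod>a\<in>A. map_poly mconst (f a))"
  by (induction A rule: infinite_finite_induct) (auto simp: map_poly_mconst_mult)

lemma prime_ideal_mconst_notin:
  assumes "prime_ideal P" "a \<noteq> 0"
  shows "mconst a \<notin> P"
proof
  assume "mconst a \<in> P"
  with assms(1) have "mconst (1 / a) * mconst a \<in> P"
    unfolding prime_ideal_def by (blast intro: ring_ideal.subspace_scale)
  with assms show False by (simp add: prime_ideal_def mconst_mult[symmetric])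
qed

lemma prime_ideal_contains_linear_factor:
  assumes P: "prime_ideal P" and "q \<noteq> 0" and q: "poly (map_poly mconst q) t \<in> P"
  shows "\<exists>c. t - mconst c \<in> P"
proof -
  obtain root where root: "smult (lead_coeff q) (\<Prod>i<degree q. [:- root i, 1:]) = q"
    by (rule complex_poly_decompose')
  have "poly (map_poly mconst q) t = mconst (lead_coeff q) * (\<Prod>i<degree q. t - mconst (root i))"
    by (subst root[symmetric])
      (simp add: map_poly_mconst_smult map_poly_mconst_prod map_poly_mconst_linear poly_prod mconst_uminus)
  with q P have "mconst (lead_coeff q) \<in> P \<or> (\<Prod>i<degree q. t - mconst (root i)) \<in> P"
    unfolding prime_ideal_def by metis
  moreover have "mconst (lead_coeff q) \<notin> P"
    using prime_ideal_mconst_notin[OF P] \<open>q \<noteq> 0\<close> by simp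
  ultimately show ?thesis
    using prime_ideal_prod[OF P, where g = "\<lambda>i. t - mconst (root i)"] by blast
qed

lemma finitely_supported_family_dependent:
  fixes r :: "'c \<Rightarrow> 'n::finite mpoly"
  assumes "infinite S" "finite B" and supp: "\<And>c. c \<in> S \<Longrightarrow> Poly_Mapping.keys (r c) \<subseteq> B"
  obtains J l where "finite J" "J \<subseteq> S" "\<exists>c\<in>J. l c \<noteq> 0" "(\<Sum>c\<in>J. mconst (l c) * r c) = 0"
proof -
  obtain J where J: "finite J" "card J = Suc (card B)" "J \<subseteq> S"
    using infinite_arbitrarily_large[OF assms(1)] by blast
  then obtain l where l: "\<exists>c\<in>J. l c \<noteq> 0" "\<forall>m\<in>B. (\<Sum>c\<in>J. l c * Poly_Mapping.lookup (r c) m) = 0"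
    using exists_nontrivial_linear_relation[OF assms(2) J(1), of "\<lambda>c m. Poly_Mapping.lookup (r c) m"]
    by auto
  have "Poly_Mapping.lookup (r c) m = 0" if "c \<in> J" "m \<notin> B" for c m
    using supp[of c] that J(3) by (metis in_keys_iff subsetD)
  then have "(\<Sum>c\<in>J. mconst (l c) * r c) = 0"
    using l(2) by (intro poly_mapping_eqI) (auto simp: lookup_sum lookup_mconst_mult)
  with J l(1) show ?thesis using that by blast
qed

lemma prime_ideal_linear_factor_from_relation:
  fixes P :: "'n::finite mpoly set"
  assumes P: "prime_ideal P" "f ^ k \<notin> P"
    and J: "finite J" "\<exists>c\<in>J. l c \<noteq> 0" and rel: "(\<Sum>c\<in>J. mconst (l c) * r c) = 0"
    and cong: "\<And>c. c \<in> J \<Longrightarrow> f ^ k - r c * (t - mconst c) \<in> P"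
  shows "\<exists>c. t - mconst c \<in> P"
proof -
  have ideal: "ring_ideal.subspace P"
    using P(1) by (simp add: prime_ideal_def)
  obtain c0 where c0: "c0 \<in> J" "l c0 \<noteq> 0"
    using J(2) by blast
  define Q where "Q c = (\<Prod>c'\<in>J - {c}. t - mconst c')" for c
  have Q: "Q c * (t - mconst c) = (\<Prod>c'\<in>J. t - mconst c')" if "c \<in> J" for c
    unfolding Q_def using prod.remove[OF J(1) that, of "\<lambda>c'. t - mconst c'"] by (simp add: mult.commute)
  \<comment> \<open>Weighting the congruences by \<open>l c * Q c\<close> makes the \<open>r c\<close>-terms cancel by \<open>rel\<close>.\<close>
  have "(\<Sum>c\<in>J. mconst (l c) * Q c * (r c * (t - mconst c)))
      = (\<Sum>c\<in>J. (mconst (l c) * r c) * (Q c * (t - mconst c)))"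
    by (simp add: mult_ac)
  also have "\<dots> = (\<Sum>c\<in>J. mconst (l c) * r c) * (\<Prod>c'\<in>J. t - mconst c')"
    unfolding sum_distrib_right by (intro sum.cong refl) (simp add: Q)
  finally have "(\<Sum>c\<in>J. mconst (l c) * Q c * (r c * (t - mconst c))) = 0"
    by (simp add: rel)
  then have "(\<Sum>c\<in>J. mconst (l c) * Q c) * f ^ k = (\<Sum>c\<in>J. mconst (l c) * Q c * (f ^ k - r c * (t - mconst c)))"
    by (simp add: sum_distrib_right right_diff_distrib sum_subtractf)
  also have "\<dots> \<in> P"
    using cong by (intro ring_ideal.subspace_sum[OF ideal] ring_ideal.subspace_scale[OF ideal])
  finally have "(\<Sum>c\<in>J. mconst (l c) * Q c) \<in> P"
    using P unfolding prime_ideal_def by blast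
  moreover have "poly (map_poly mconst (\<Sum>c\<in>J. smult (l c) (\<Prod>c'\<in>J - {c}. [:- c', 1:]))) t
      = (\<Sum>c\<in>J. mconst (l c) * Q c)"
    by (simp add: Q_def map_poly_mconst_sum map_poly_mconst_prod poly_sum poly_prod
        map_poly_mconst_smult map_poly_mconst_linear mconst_uminus)
  ultimately show ?thesis
    by (intro prime_ideal_contains_linear_factor[OF P(1) lagrange_combination_nonzero[where l = l, OF J(1) c0]]) simp
qed

lemma saturated_prime_ideal_residue_constant:
  fixes P :: "'n::finite mpoly set"
  assumes P: "prime_ideal P" "\<forall>k. f ^ k \<notin> P"
    and sat: "\<And>g. g \<notin> P \<Longrightarrow> \<exists>k r. f ^ k - r * g \<in> P"
  shows "\<exists>c. t - mconst c \<in> P"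
proof (rule ccontr)
  assume "\<nexists>c. t - mconst c \<in> P"
  then have "\<forall>c. \<exists>k r. f ^ k - r * (t - mconst c) \<in> P"
    using sat by blast
  then obtain k r where kr: "\<And>c. f ^ k c - r c * (t - mconst c) \<in> P"
    by metis
  define deg where "deg q = Max (insert 0 (mdeg ` Poly_Mapping.keys q))" for q :: "'n mpoly"
  \<comment> \<open>Uncountably many \<open>c\<close> but countably many values of \<open>(k c, deg (r c))\<close>: infinitely many \<open>c\<close>
    share \<open>k c\<close> and the degree bound, so their \<open>r c\<close> are linearly dependent.\<close>
  obtain kd where "infinite ((\<lambda>c. (k c, deg (r c))) -` {kd})"
    using uncountable_UNIV_infinite_fibre[OF uncountable_UNIV_complex] by blast
  then obtain k0 d where S: "infinite {c. k c = k0 \<and> deg (r c) = d}"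
    by (cases kd) (auto simp: vimage_def)
  have "Poly_Mapping.keys (r c) \<subseteq> {m. mdeg m \<le> d}" if "c \<in> {c. k c = k0 \<and> deg (r c) = d}" for c
  proof
    fix m assume "m \<in> Poly_Mapping.keys (r c)"
    then have "mdeg m \<le> deg (r c)"
      unfolding deg_def by (intro Max_ge) auto
    with that show "m \<in> {m. mdeg m \<le> d}" by simp
  qed
  then obtain J l where J: "finite J" "J \<subseteq> {c. k c = k0 \<and> deg (r c) = d}"
    "\<exists>c\<in>J. l c \<noteq> 0" "(\<Sum>c\<in>J. mconst (l c) * r c) = 0"
    by (rule finitely_supported_family_dependent[OF S finite_monomials_of_bounded_degree])
  have "\<exists>c. t - mconst c \<in> P"
  proof (rule prime_ideal_linear_factor_from_relation[OF P(1) _ J(1,3,4)])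
    show "f ^ k0 \<notin> P" using P(2) by blast
    show "f ^ k0 - r c * (t - mconst c) \<in> P" if "c \<in> J" for c
      using kr[of c] that J(2) by auto
  qed
  with \<open>\<nexists>c. t - mconst c \<in> P\<close> show False ..
qed

lemma nullstellensatz:
  fixes I :: "'n::finite mpoly set"
  assumes "ring_ideal.subspace I" "\<forall>k. f ^ k \<notin> I"
  obtains c where "\<And>g. g \<in> I \<Longrightarrow> eval g c = 0" "eval f c \<noteq> 0"
proof -
  obtain P where P: "ring_ideal.subspace P" "I \<subseteq> P" "\<forall>k. f ^ k \<notin> P"
    and sat: "\<And>g. g \<notin> P \<Longrightarrow> \<exists>k r. f ^ k - r * g \<in> P"
    using ideal_avoiding_powers_extends_to_saturated[OF assms] by blast
  have prime: "prime_ideal P"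
    using saturated_ideal_is_prime[OF P(1,3) sat] .
  have "\<exists>c. mvar i - mconst c \<in> P" for i
    by (rule saturated_prime_ideal_residue_constant[OF prime P(3) sat])
  then obtain a where "\<And>i. mvar i - mconst (a i) \<in> P"
    by metis
  then have congr: "g - mconst (eval g (\<chi> i. a i)) \<in> P" for g
    by (intro eval_congruence[OF P(1)]) simp
  show ?thesis
  proof
    fix g assume "g \<in> I"
    with P(2) have "g \<in> P" by blast
    from ring_ideal.subspace_diff[OF P(1) this congr[of g]]
    have "mconst (eval g (\<chi> i. a i)) \<in> P" by simp
    then show "eval g (\<chi> i. a i) = 0"
      using prime_ideal_mconst_notin[OF prime] by blast
  next
    show "eval f (\<chi> i. a i) \<noteq> 0"
    proof
      assume "eval f (\<chi> i. a i) = 0"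
      with congr[of f] have "f ^ 1 \<in> P" by simp
      with P(3) show False by blast
    qed
  qed
qed

lemma eval_linear_form: "eval (\<Sum>j\<in>UNIV. mconst (a j) * mvar j) z = (\<Sum>j\<in>UNIV. a j * z $ j)"
  by (simp add: eval_sum eval_mult)

lemma subspace_separating_polynomial:
  fixes Y :: "(complex^'n::finite) set"
  assumes Y: "vec.subspace Y" and x: "x \<notin> Y"
  obtains h where "\<And>y. y \<in> Y \<Longrightarrow> eval h y = 0" "eval h x \<noteq> 0"
proof -
  obtain B where B: "B \<subseteq> Y" "vec.independent B" "Y \<subseteq> vec.span B" "card B = vec.dim Y"
    by (rule vec.basis_exists[of Y])
  have span: "vec.span B = Y" using vec.span_subspace[OF B(1) B(3) Y] .
  \<comment> \<open>A linear map killing \<open>B\<close> (hence \<open>Y\<close>) and fixing \<open>x\<close>; one coordinate of it is the separating form.\<close>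
  have "x \<notin> vec.span B" using x span by simp
  from vec.independent_insertI[OF this B(2)]
  obtain g where g: "Vector_Spaces.linear (*s) (*s) g" "\<forall>z\<in>insert x B. g z = (if z = x then x else 0)"
    by (elim vec.linear_independent_extend[THEN exE]) (elim conjE)
  have gY: "g y = 0" if "y \<in> Y" for y
  proof (rule vec.linear_eq_0_on_span[OF g(1)])
    show "y \<in> vec.span B" using that span by simp
    show "g z = 0" if "z \<in> B" for z
      using that g(2) x B(1) by auto
  qed
  have "x \<noteq> 0" using x vec.subspace_0[OF Y] by auto
  then obtain k where k: "x $ k \<noteq> 0" by (metis vec_eq_iff zero_index)
  have "eval (\<Sum>j\<in>UNIV. mconst (matrix g $ k $ j) * mvar j) z = g z $ k" for z
    by (simp add: eval_linear_form matrix_works[OF g(1), symmetric] matrix_vector_mult_def)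
  with gY g(2) k show ?thesis
    by (intro that[of "\<Sum>j\<in>UNIV. mconst (matrix g $ k $ j) * mvar j"]) auto
qed

lemma eval_pder:
  "eval (pder i f) w = (\<Sum>m\<in>Poly_Mapping.keys f. Poly_Mapping.lookup f m * of_nat (Poly_Mapping.lookup m i)
     * (w $ i ^ (Poly_Mapping.lookup m i - 1) * (\<Prod>j\<in>UNIV - {i}. w $ j ^ Poly_Mapping.lookup m j)))"
proof -
  have "eval_monomial (m - Poly_Mapping.single i 1) w
      = w $ i ^ (Poly_Mapping.lookup m i - 1) * (\<Prod>j\<in>UNIV - {i}. w $ j ^ Poly_Mapping.lookup m j)"
    for m :: "'a \<Rightarrow>\<^sub>0 nat"
    unfolding eval_monomial_def
    by (subst prod.remove[of UNIV i]) (auto simp: lookup_minus lookup_single intro!: prod.cong)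
  then show ?thesis
    by (simp add: pder_def eval_sum eval_single mult.assoc)
qed

lemma has_field_derivative_eval_along_line:
  "((\<lambda>s. eval f (y + s *s v)) has_field_derivative (\<Sum>i\<in>UNIV. v $ i * eval (pder i f) (y + z *s v))) (at z)"
proof -
  let ?w = "\<lambda>j. y $ j + z * v $ j"
  have "((\<lambda>s. \<Prod>i\<in>UNIV. (y $ i + s * v $ i) ^ Poly_Mapping.lookup m i) has_field_derivative
      (\<Sum>i\<in>UNIV. of_nat (Poly_Mapping.lookup m i) * (v $ i * ?w i ^ (Poly_Mapping.lookup m i - 1))
        * (\<Prod>j\<in>UNIV - {i}. ?w j ^ Poly_Mapping.lookup m j))) (at z)" for m :: "'a \<Rightarrow>\<^sub>0 nat"
    by (rule has_field_derivative_prod) (auto intro!: derivative_eq_intros)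
  then have "((\<lambda>s. eval f (y + s *s v)) has_field_derivative
      (\<Sum>m\<in>Poly_Mapping.keys f. Poly_Mapping.lookup f m * (\<Sum>i\<in>UNIV. of_nat (Poly_Mapping.lookup m i)
        * (v $ i * ?w i ^ (Poly_Mapping.lookup m i - 1)) * (\<Prod>j\<in>UNIV - {i}. ?w j ^ Poly_Mapping.lookup m j)))) (at z)"
    unfolding eval_def by (auto intro!: DERIV_sum DERIV_cmult)
  also have "(\<Sum>m\<in>Poly_Mapping.keys f. Poly_Mapping.lookup f m * (\<Sum>i\<in>UNIV. of_nat (Poly_Mapping.lookup m i)
        * (v $ i * ?w i ^ (Poly_Mapping.lookup m i - 1)) * (\<Prod>j\<in>UNIV - {i}. ?w j ^ Poly_Mapping.lookup m j)))
      = (\<Sum>i\<in>UNIV. v $ i * eval (pder i f) (y + z *s v))"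
    by (simp add: eval_pder sum_distrib_left mult_ac sum.swap[of _ UNIV])
  finally show ?thesis .
qed

lemma directional_derivative_vanishes_on_subspace:
  assumes Y: "vec.subspace Y" and f: "\<And>y. y \<in> Y \<Longrightarrow> eval f y = 0" and "y \<in> Y" "v \<in> Y"
  shows "(\<Sum>i\<in>UNIV. v $ i * eval (pder i f) y) = 0"
proof -
  have "(\<lambda>s. eval f (y + s *s v)) = (\<lambda>s. 0)"
    using assms by (auto intro!: f vec.subspace_add vec.subspace_scale)
  then have "((\<lambda>s. 0) has_field_derivative (\<Sum>i\<in>UNIV. v $ i * eval (pder i f) y)) (at 0)"
    using has_field_derivative_eval_along_line[of f y v 0] by simp
  then show ?thesis
    using DERIV_const DERIV_unique by blast
qed

lemma scaled_constant_field_in_logDer: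
  assumes sub: "\<And>Y. Y \<in> Xs \<Longrightarrow> vec.subspace Y"
    and tangent: "\<And>Y. Y \<in> Xs \<Longrightarrow> v \<in> Y \<or> (\<forall>y\<in>Y. eval h y = 0)"
  shows "(\<lambda>i. h * mconst (v $ i)) \<in> logDer Xs"
  unfolding logDer_def arr_ideal_def
proof (intro CollectI ballI)
  fix g Y y assume g: "g \<in> {f. \<forall>X\<in>Xs. \<forall>x\<in>X. eval f x = 0}" and "Y \<in> Xs" "y \<in> Y"
  have "eval (apply_vf (\<lambda>i. h * mconst (v $ i)) g) y = eval h y * (\<Sum>i\<in>UNIV. v $ i * eval (pder i g) y)"
    by (simp add: apply_vf_def eval_sum eval_mult sum_distrib_left mult_ac)
  moreover have "(\<Sum>i\<in>UNIV. v $ i * eval (pder i g) y) = 0" if "v \<in> Y"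
    using g \<open>Y \<in> Xs\<close> \<open>y \<in> Y\<close> that by (intro directional_derivative_vanishes_on_subspace[OF sub]) auto
  ultimately show "eval (apply_vf (\<lambda>i. h * mconst (v $ i)) g) y = 0"
    using tangent[OF \<open>Y \<in> Xs\<close>] \<open>y \<in> Y\<close> by auto
qed

lemma finite_family_separating_polynomial:
  assumes "finite Ys" "\<And>Y. Y \<in> Ys \<Longrightarrow> vec.subspace Y" "\<And>Y. Y \<in> Ys \<Longrightarrow> x \<notin> Y"
  obtains h where "\<And>Y y. Y \<in> Ys \<Longrightarrow> y \<in> Y \<Longrightarrow> eval h y = 0" "eval h x \<noteq> 0"
proof -
  have "\<forall>Y\<in>Ys. \<exists>h. (\<forall>y\<in>Y. eval h y = 0) \<and> eval h x \<noteq> 0"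
    using assms(2,3) subspace_separating_polynomial by metis
  then obtain hY where hY: "\<And>Y y. Y \<in> Ys \<Longrightarrow> y \<in> Y \<Longrightarrow> eval (hY Y) y = 0" "\<And>Y. Y \<in> Ys \<Longrightarrow> eval (hY Y) x \<noteq> 0"
    by metis
  show ?thesis
  proof (rule that[of "\<Prod>Y\<in>Ys. hY Y"])
    show "eval (\<Prod>Y\<in>Ys. hY Y) y = 0" if "Y \<in> Ys" "y \<in> Y" for Y y
      unfolding eval_prod using assms(1) hY(1) that by (intro prod_zero) auto
    show "eval (\<Prod>Y\<in>Ys. hY Y) x \<noteq> 0"
      unfolding eval_prod using assms(1) hY(2) by auto
  qed
qed

lemma logDer_contraction_nonvanishing:
  assumes Xs: "central_equidim_arrangement Xs" and \<eta>: "\<eta> \<in> Np Xs p" and "x \<noteq> 0"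
  obtains \<delta> where "\<delta> \<in> logDer Xs" "eval (contract \<eta> \<delta>) x \<noteq> 0"
proof -
  have fin: "finite Xs" and sub: "\<And>Y. Y \<in> Xs \<Longrightarrow> vec.subspace Y"
    using Xs by (auto simp: central_equidim_arrangement_def)
  define X where "X = \<Inter>{Y\<in>Xs. x \<in> Y}"
  have "X \<in> int_lattice Xs" "x \<in> X"
    unfolding int_lattice_def X_def by blast+
  moreover have "vec.dim X > 0"
  proof (rule ccontr)
    assume "\<not> vec.dim X > 0"
    then have "X \<subseteq> {0}" by simp
    with \<open>x \<in> X\<close> \<open>x \<noteq> 0\<close> show False by blast
  qed
  moreover have "\<forall>X\<in>int_lattice Xs. vec.dim X > 0 \<longrightarrow> (\<forall>x\<in>X. restr_vanishes_at \<eta> X x \<longrightarrow> x = 0)"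
    using \<eta> unfolding Np_def by blast
  ultimately have "\<not> restr_vanishes_at \<eta> X x"
    using \<open>x \<noteq> 0\<close> by blast
  then obtain v where "v \<in> X" and v: "(\<Sum>i\<in>UNIV. eval (\<eta> i) x * v $ i) \<noteq> 0"
    unfolding restr_vanishes_at_def by blast
  obtain h where h: "\<And>Y y. Y \<in> {Y\<in>Xs. x \<notin> Y} \<Longrightarrow> y \<in> Y \<Longrightarrow> eval h y = 0" "eval h x \<noteq> 0"
    by (rule finite_family_separating_polynomial[of "{Y\<in>Xs. x \<notin> Y}" x]) (use fin sub in auto)
  show ?thesis
  proof (rule that)
    show "(\<lambda>i. h * mconst (v $ i)) \<in> logDer Xs"
    proof (rule scaled_constant_field_in_logDer[OF sub])
      fix Y assume "Y \<in> Xs"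
      show "v \<in> Y \<or> (\<forall>y\<in>Y. eval h y = 0)"
      proof (cases "x \<in> Y")
        case True
        with \<open>Y \<in> Xs\<close> \<open>v \<in> X\<close> show ?thesis by (auto simp: X_def)
      next
        case False
        with \<open>Y \<in> Xs\<close> h(1) show ?thesis by blast
      qed
    qed
    have "eval (contract \<eta> (\<lambda>i. h * mconst (v $ i))) x = eval h x * (\<Sum>i\<in>UNIV. eval (\<eta> i) x * v $ i)"
      by (simp add: contract_def eval_sum eval_mult sum_distrib_left mult_ac)
    with h(2) v show "eval (contract \<eta> (\<lambda>i. h * mconst (v $ i))) x \<noteq> 0" by simp
  qed
qed

theorem lemma3p6:
  fixes Xs :: "(complex^'n::finite) set set" and p :: nat and \<eta> :: "'n \<Rightarrow> 'n mpoly"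
  assumes "central_equidim_arrangement Xs"
    and "\<eta> \<in> Np Xs p"
  shows "irrelevant_ideal \<subseteq> radical (ideal_gen {contract \<eta> \<delta> | \<delta>. \<delta> \<in> logDer Xs})"
proof
  fix f :: "'n mpoly" assume f: "f \<in> irrelevant_ideal"
  let ?I = "ideal_gen {contract \<eta> \<delta> | \<delta>. \<delta> \<in> logDer Xs}"
  show "f \<in> radical ?I"
  proof (rule ccontr)
    assume "f \<notin> radical ?I"
    then obtain c where c: "\<And>g. g \<in> ?I \<Longrightarrow> eval g c = 0" "eval f c \<noteq> 0"
      using nullstellensatz[of ?I f] by (auto simp: radical_def ideal_gen_eq_span)
    have "c \<noteq> 0"
      using c(2) f by (auto simp: eval_at_0 irrelevant_ideal_def)
    then obtain \<delta> where "\<delta> \<in> logDer Xs" "eval (contract \<eta> \<delta>) c \<noteq> 0"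
      using logDer_contraction_nonvanishing[OF assms] by blast
    moreover have "contract \<eta> \<delta> \<in> ?I"
      using \<open>\<delta> \<in> logDer Xs\<close> unfolding ideal_gen_eq_span by (blast intro: ring_ideal.span_base)
    ultimately show False using c(1) by blast
  qed
qed

end
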